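(* Let $A$ be a finite alphabet and let $w\in A^{+}$ with $|w|\le 2$. Then for every integer $k\ge0$ the language $\mathrm{Count}(w,k)$ has generalised star-height $0$, and for all integers $n\ge2$ and $0\le k<n$ the language $\mathrm{ModCount}(w,k,n)$ has generalised star-height at most $1$.
   Context: Generalised regular expressions over $A$: $\emptyset$, $\varepsilon$ and each letter are expressions; if $E,F$ are expressions so are $E\cup F$, $EF$, $E^{\ast}$, $E^{c}$ (complement in $A^{\ast}$). Star-height: $h(\emptyset)=h(\varepsilon)=h(a)=0$, $h(E\cup F)=h(EF)=\max\{h(E),h(F)\}$, $h(E^{\ast})=h(E)+1$, $h(E^{c})=h(E)$; the star-height of a language is the minimum of $h(E)$ over expressions $E$ representing it. For $w\in A^{+}$ and $v\in A^{\ast}$, $|v|_{w}$ is the number of factorisations $v=xwy$ with $x,y\in A^{\ast}$ (overlapping occurrences counted separately). $\mathrm{Count}(w,k)=\{v\in A^{\ast}:|v|_{w}=k\}$ for $k\ge0$; $\mathrm{ModCount}(w,k,n)=\{v\in A^{\ast}:|v|_{w}\equiv k\pmod n\}$ for $n\ge2$, $0\le k<n$. *)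

theory Defs
  imports Main
begin

datatype 'a gre =
    Empty
  | Eps
  | Letter 'a
  | Union "'a gre" "'a gre"
  | Concat "'a gre" "'a gre"
  | Star "'a gre"
  | Compl "'a gre"

fun lang :: "'a set \<Rightarrow> 'a gre \<Rightarrow> 'a list set" where
  "lang A Empty = {}"
| "lang A Eps = {[]}"
| "lang A (Letter a) = {[a]}"
| "lang A (Union E F) = lang A E \<union> lang A F"
| "lang A (Concat E F) = {u @ v | u v. u \<in> lang A E \<and> v \<in> lang A F}"
| "lang A (Star E) = {concat us | us. \<forall>u\<in>set us. u \<in> lang A E}"
| "lang A (Compl E) = lists A - lang A E"

fun letters :: "'a gre \<Rightarrow> 'a set" where
  "letters Empty = {}"
| "letters Eps = {}"
| "letters (Letter a) = {a}"
| "letters (Union E F) = letters E \<union> letters F"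
| "letters (Concat E F) = letters E \<union> letters F"
| "letters (Star E) = letters E"
| "letters (Compl E) = letters E"

definition expr_over :: "'a set \<Rightarrow> 'a gre \<Rightarrow> bool" where
  "expr_over A E \<longleftrightarrow> letters E \<subseteq> A"

fun height :: "'a gre \<Rightarrow> nat" where
  "height Empty = 0"
| "height Eps = 0"
| "height (Letter a) = 0"
| "height (Union E F) = max (height E) (height F)"
| "height (Concat E F) = max (height E) (height F)"
| "height (Star E) = height E + 1"
| "height (Compl E) = height E"

definition star_height :: "'a set \<Rightarrow> 'a list set \<Rightarrow> nat" where
  "star_height A L = (LEAST h. \<exists>E. expr_over A E \<and> lang A E = L \<and> height E = h)"

definition occ :: "'a list \<Rightarrow> 'a list \<Rightarrow> nat" where
  "occ w v = card {(x, y). v = x @ w @ y}"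

definition Count :: "'a set \<Rightarrow> 'a list \<Rightarrow> nat \<Rightarrow> 'a list set" where
  "Count A w k = {v \<in> lists A. occ w v = k}"

definition ModCount :: "'a set \<Rightarrow> 'a list \<Rightarrow> nat \<Rightarrow> nat \<Rightarrow> 'a list set" where
  "ModCount A w k n = {v \<in> lists A. occ w v mod n = k}"

end

theory Submission
  imports Defs
begin

text \<open>
  Count(w,0) is the complement of \<open>A\<^sup>*wA\<^sup>*\<close>, hence star-free. Cutting a word at the last
  occurrence of \<open>w\<close> gives \<open>Count(w,j+1) = P M\<^sup>j L\<close> with star-free \<open>P, M, L\<close>:
  if \<open>w\<close> cannot overlap itself (\<open>w = a\<close> or \<open>w = ab\<close> with \<open>a \<noteq> b\<close>) then
  \<open>P = Count(w,0)\<close> and \<open>M = L = w Count(w,0)\<close>; for \<open>w = aa\<close> one cuts between the two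
  letters \<open>a\<close> and takes for \<open>P, M, L\<close> the \<open>aa\<close>-free words ending in \<open>a\<close>, beginning and
  ending in \<open>a\<close>, and beginning in \<open>a\<close>. Hence every Count(w,k) is star-free, and
  ModCount(w,k,n) is a union of Count(w,0) and languages \<open>P M\<^sup>j (M\<^sup>n)\<^sup>* L\<close>.
\<close>

section \<open>Counting occurrences of a factor\<close>

lemma finite_factorisations: "finite {(x, y). v = x @ w @ y}"
proof (rule finite_subset)
  show "{(x, y). v = x @ w @ y} \<subseteq> (\<lambda>i. (take i v, drop (i + length w) v)) ` {..length v}"
  proof
    fix p assume "p \<in> {(x, y). v = x @ w @ y}"
    then obtain x y where "p = (x, y)" "v = x @ w @ y" by auto
    then show "p \<in> (\<lambda>i. (take i v, drop (i + length w) v)) ` {..length v}"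
      by (intro image_eqI[of _ _ "length x"]) auto
  qed
qed auto

lemma occ_Nil: "w \<noteq> [] \<Longrightarrow> occ w [] = 0"
  by (simp add: occ_def)

lemma occ_Cons:
  assumes "w \<noteq> []"
  shows "occ w (c # v) = (if take (length w) (c # v) = w then 1 else 0) + occ w v"
proof -
  let ?F = "\<lambda>v. {(x, y). v = x @ w @ y}"
  let ?prefix = "{(x :: 'a list, y). x = [] \<and> c # v = w @ y}"
  have split: "?F (c # v) = ?prefix \<union> (\<lambda>(x, y). (c # x, y)) ` ?F v"
    by (auto simp: Cons_eq_append_conv image_iff)
  have card_prefix: "card ?prefix = (if take (length w) (c # v) = w then 1 else 0)"
  proof (cases "take (length w) (c # v) = w")
    case True
    then have prefix: "?prefix = {([], drop (length w) (c # v))}"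
      by (auto, metis append_take_drop_id)
    show ?thesis unfolding prefix using True by simp
  next
    case False
    then have "?prefix = {}" by auto
    then show ?thesis using False by simp
  qed
  have "finite ?prefix"
    by (rule finite_subset[OF _ finite_factorisations[of "c # v" w]]) auto
  moreover have "inj_on (\<lambda>(x, y). (c # x, y)) (?F v)"
    by (auto simp: inj_on_def)
  ultimately show ?thesis
    unfolding occ_def split using card_prefix assms
    by (subst card_Un_disjoint) (auto simp: card_image finite_factorisations)
qed

lemma occ_le_occ_append: "w \<noteq> [] \<Longrightarrow> occ w v \<le> occ w (u @ v)"
  by (induction u) (auto simp: occ_Cons)

lemma occ_eq_0_iff: "occ w v = 0 \<longleftrightarrow> (\<nexists>x y. v = x @ w @ y)"
  unfolding occ_def using finite_factorisations[of v w] by auto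

lemma last_occurrence:
  assumes "w \<noteq> []" "occ w v \<noteq> 0"
  obtains x y where "v = x @ w @ y" "occ w (tl w @ y) = 0"
  using assms(2)
proof (induction v arbitrary: thesis)
  case Nil
  then show ?case using assms(1) by (simp add: occ_Nil)
next
  case (Cons c v)
  show ?case
  proof (cases "occ w v = 0")
    case True
    then have "take (length w) (c # v) = w"
      using Cons.prems(2) occ_Cons[OF assms(1), of c v] by (auto split: if_splits)
    then have "c # v = w @ drop (length w) (c # v)"
      by (metis append_take_drop_id)
    moreover from this have "tl w @ drop (length w) (c # v) = v"
      using assms(1) by (metis list.sel(3) tl_append2)
    ultimately show ?thesis using True by (intro Cons.prems(1)[of "[]"]) auto
  next
    case False
    show ?thesis by (rule Cons.IH[OF _ False]) (rule Cons.prems(1)[of "c # _"], auto)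
  qed
qed

lemma occ_singleton_append: "occ [a] (u @ v) = occ [a] u + occ [a] v"
  by (induction u) (auto simp: occ_Cons occ_Nil)

lemma occ_pair_append:
  "occ [a, b] (u @ v) = occ [a, b] u + occ [a, b] v
     + (if u \<noteq> [] \<and> v \<noteq> [] \<and> last u = a \<and> hd v = b then 1 else 0)"
proof (induction u)
  case Nil
  then show ?case by (simp add: occ_Nil)
next
  case (Cons c u)
  then show ?case by (cases u; cases v) (auto simp: occ_Cons occ_Nil)
qed

lemma occ_singleton_no_overlap: "occ [a] (u @ [a] @ z) = occ [a] u + 1 + occ [a] z"
  by (simp add: occ_singleton_append occ_Cons)

lemma occ_pair_no_overlap:
  "a \<noteq> b \<Longrightarrow> occ [a, b] (u @ [a, b] @ z) = occ [a, b] u + 1 + occ [a, b] z"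
  by (simp add: occ_pair_append occ_Cons)

section \<open>Operations on languages\<close>

definition conc :: "'a list set \<Rightarrow> 'a list set \<Rightarrow> 'a list set" where
  "conc X Y = {u @ v | u v. u \<in> X \<and> v \<in> Y}"

primrec lang_pow :: "'a list set \<Rightarrow> nat \<Rightarrow> 'a list set" where
  "lang_pow X 0 = {[]}"
| "lang_pow X (Suc n) = conc (lang_pow X n) X"

definition lang_star :: "'a list set \<Rightarrow> 'a list set" where
  "lang_star X = {concat us | us. \<forall>u\<in>set us. u \<in> X}"

lemma conc_assoc: "conc (conc X Y) Z = conc X (conc Y Z)"
  unfolding conc_def by (auto, metis append_assoc, metis append_assoc)

lemma conc_Nil_right [simp]: "conc X {[]} = X"
  unfolding conc_def by auto

lemma conc_UN_right: "conc X (\<Union>i. Y i) = (\<Union>i. conc X (Y i))"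
  and conc_UN_left: "conc (\<Union>i. Y i) X = (\<Union>i. conc (Y i) X)"
  unfolding conc_def by blast+

lemma lang_pow_add: "lang_pow X (m + n) = conc (lang_pow X m) (lang_pow X n)"
  by (induction n) (simp_all add: conc_assoc)

lemma lang_pow_mult: "lang_pow (lang_pow X m) n = lang_pow X (m * n)"
proof (induction n)
  case (Suc n)
  then have "lang_pow (lang_pow X m) (Suc n) = lang_pow X (m * n + m)"
    by (simp add: lang_pow_add)
  then show ?case by (simp add: add.commute)
qed simp

lemma lang_star_eq_UN_pow: "lang_star X = (\<Union>i. lang_pow X i)"
proof (intro equalityI subsetI)
  fix v assume "v \<in> lang_star X"
  then obtain us where v: "v = concat us" "\<forall>u\<in>set us. u \<in> X"
    unfolding lang_star_def by auto
  have "concat us \<in> lang_pow X (length us)" using v(2)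
    by (induction us rule: rev_induct) (auto simp: conc_def)
  then show "v \<in> (\<Union>i. lang_pow X i)" using v by auto
next
  fix v assume "v \<in> (\<Union>i. lang_pow X i)"
  then obtain i where "v \<in> lang_pow X i" by auto
  then show "v \<in> lang_star X"
  proof (induction i arbitrary: v)
    case 0
    then show ?case unfolding lang_star_def by (auto intro: exI[of _ "[]"])
  next
    case (Suc i)
    then obtain p u where pu: "v = p @ u" "p \<in> lang_pow X i" "u \<in> X"
      by (auto simp: conc_def)
    with Suc.IH obtain us where "p = concat us" "\<forall>u\<in>set us. u \<in> X"
      unfolding lang_star_def by auto
    with pu show ?case unfolding lang_star_def by (auto intro!: exI[of _ "us @ [u]"])
  qed
qed

lemma lang_pow_recurrence:
  assumes "\<And>j. X (Suc j) = conc (X j) M"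
  shows "X j = conc (X 0) (lang_pow M j)"
  by (induction j) (simp_all add: assms conc_assoc)

lemma UN_conc_pow_progression:
  "(\<Union>i. conc (conc P (lang_pow M (j + n * i))) L)
     = conc (conc (conc P (lang_pow M j)) (lang_star (lang_pow M n))) L"
  by (simp add: lang_star_eq_UN_pow lang_pow_mult lang_pow_add conc_UN_left conc_UN_right
      conc_assoc)

section \<open>Languages of bounded star-height\<close>

definition expressible :: "'a set \<Rightarrow> nat \<Rightarrow> 'a list set \<Rightarrow> bool" where
  "expressible A h L \<longleftrightarrow> (\<exists>E. expr_over A E \<and> height E \<le> h \<and> lang A E = L)"

lemma star_height_le_if_expressible:
  assumes "expressible A h L"
  shows "star_height A L \<le> h"
proof -
  obtain E where E: "expr_over A E" "height E \<le> h" "lang A E = L"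
    using assms unfolding expressible_def by blast
  then have "star_height A L \<le> height E"
    unfolding star_height_def by (intro Least_le) blast
  with E(2) show ?thesis by simp
qed

lemma expressible_subset_lists: "expressible A h L \<Longrightarrow> L \<subseteq> lists A"
proof -
  have "expr_over A E \<Longrightarrow> lang A E \<subseteq> lists A" for E
    by (induction E) (fastforce simp: expr_over_def)+
  then show "expressible A h L \<Longrightarrow> L \<subseteq> lists A"
    unfolding expressible_def by blast
qed

lemma expressible_mono: "expressible A h L \<Longrightarrow> h \<le> h' \<Longrightarrow> expressible A h' L"
  unfolding expressible_def by force

lemma expressible_empty: "expressible A h {}"
  and expressible_Nil: "expressible A h {[]}"
  and expressible_letter: "a \<in> A \<Longrightarrow> expressible A h {[a]}"
  unfolding expressible_def expr_over_def
  by (auto intro: exI[of _ Empty] exI[of _ Eps] exI[of _ "Letter a"])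

lemma expressible_union:
  "expressible A h X \<Longrightarrow> expressible A h Y \<Longrightarrow> expressible A h (X \<union> Y)"
  unfolding expressible_def
  by (clarify, rule_tac x = "Union E Ea" in exI) (simp add: expr_over_def)

lemma expressible_conc:
  "expressible A h X \<Longrightarrow> expressible A h Y \<Longrightarrow> expressible A h (conc X Y)"
  unfolding expressible_def
  by (clarify, rule_tac x = "Concat E Ea" in exI) (simp add: expr_over_def conc_def)

lemma expressible_diff_lists: "expressible A h X \<Longrightarrow> expressible A h (lists A - X)"
  unfolding expressible_def
  by (clarify, rule_tac x = "Compl E" in exI) (simp add: expr_over_def)

lemma expressible_star: "expressible A h X \<Longrightarrow> expressible A (Suc h) (lang_star X)"
  unfolding expressible_def
  by (clarify, rule_tac x = "Star E" in exI) (simp add: expr_over_def lang_star_def)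

lemma expressible_lists: "expressible A h (lists A)"
  using expressible_diff_lists[OF expressible_empty] by simp

lemma expressible_Int:
  assumes "expressible A h X" "expressible A h Y"
  shows "expressible A h (X \<inter> Y)"
proof -
  have "X \<inter> Y = lists A - ((lists A - X) \<union> (lists A - Y))"
    using assms[THEN expressible_subset_lists] by blast
  with assms show ?thesis by (simp add: expressible_diff_lists expressible_union)
qed

lemma expressible_pow: "expressible A h X \<Longrightarrow> expressible A h (lang_pow X n)"
  by (induction n) (simp_all add: expressible_Nil expressible_conc)

lemma expressible_word: "w \<in> lists A \<Longrightarrow> expressible A h {w}"
proof (induction w)
  case (Cons c w)
  have "{c # w} = conc {[c]} {w}" by (auto simp: conc_def)
  with Cons show ?case by (simp add: expressible_conc expressible_letter)
qed (simp add: expressible_Nil)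

section \<open>Counting languages\<close>

lemma Count_0_eq:
  assumes "w \<in> lists A"
  shows "Count A w 0 = lists A - conc (conc (lists A) {w}) (lists A)"
proof -
  have "v \<in> conc (conc (lists A) {w}) (lists A) \<longleftrightarrow> v \<in> lists A \<and> (\<exists>x y. v = x @ w @ y)" for v
  proof
    assume "v \<in> lists A \<and> (\<exists>x y. v = x @ w @ y)"
    then obtain x y where "v \<in> lists A" "v = x @ w @ y" by blast
    then show "v \<in> conc (conc (lists A) {w}) (lists A)"
      unfolding conc_def by (intro CollectI exI[of _ "x @ w"] exI[of _ y]) auto
  next
    assume "v \<in> conc (conc (lists A) {w}) (lists A)"
    then obtain x y where "x \<in> lists A" "y \<in> lists A" "v = x @ w @ y"
      unfolding conc_def by force
    with assms show "v \<in> lists A \<and> (\<exists>x y. v = x @ w @ y)" by auto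
  qed
  then show ?thesis
    unfolding Count_def occ_eq_0_iff by blast
qed

lemma expressible_Count_0: "w \<in> lists A \<Longrightarrow> expressible A 0 (Count A w 0)"
  by (simp add: Count_0_eq expressible_diff_lists expressible_conc expressible_lists
      expressible_word)

lemma ModCount_eq_UN_Count: "ModCount A w k n = (\<Union>m\<in>{m. m mod n = k}. Count A w m)"
  unfolding ModCount_def Count_def by auto

lemma mod_eq_Suc_set:
  assumes "Suc j < n"
  shows "{m. m mod n = Suc j} = range (\<lambda>i. Suc (j + n * i))"
proof (intro equalityI subsetI)
  fix m assume "m \<in> {m. m mod n = Suc j}"
  then have "m = Suc (j + n * (m div n))"
    using div_mult_mod_eq[of m n] by (simp add: mult.commute)
  then show "m \<in> range (\<lambda>i. Suc (j + n * i))" by blast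
next
  fix m assume "m \<in> range (\<lambda>i. Suc (j + n * i))"
  then obtain i where "m = Suc j + n * i" by auto
  with assms show "m \<in> {m. m mod n = Suc j}" by simp
qed

lemma mod_eq_0_set:
  assumes "0 < n"
  shows "{m. m mod n = 0} = insert 0 (range (\<lambda>i. Suc (n - 1 + n * i)))"
proof (intro equalityI subsetI)
  fix m assume "m \<in> {m. m mod n = 0}"
  then obtain q where q: "m = n * q" by auto
  show "m \<in> insert 0 (range (\<lambda>i. Suc (n - 1 + n * i)))"
  proof (cases q)
    case (Suc i)
    with q assms have "m = Suc (n - 1 + n * i)" by simp
    then show ?thesis by blast
  qed (simp add: q)
next
  fix m assume "m \<in> insert 0 (range (\<lambda>i. Suc (n - 1 + n * i)))"
  then consider "m = 0" | i where "m = n * Suc i" using assms by auto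
  then show "m \<in> {m. m mod n = 0}" by cases simp_all
qed

lemma expressible_Count_ModCount_if_decomposition:
  assumes w: "w \<in> lists A"
    and PML: "expressible A 0 P" "expressible A 0 M" "expressible A 0 L"
    and decomp: "\<And>j. Count A w (Suc j) = conc (conc P (lang_pow M j)) L"
  shows "expressible A 0 (Count A w k)"
    and "k < n \<Longrightarrow> expressible A 1 (ModCount A w k n)"
proof -
  show Count: "expressible A 0 (Count A w k)" for k
    using w PML by (cases k) (simp_all add: decomp expressible_Count_0 expressible_conc
        expressible_pow)
  define U where "U j = conc (conc (conc P (lang_pow M j)) (lang_star (lang_pow M n))) L" for j
  have U: "expressible A 1 (U j)" for j
  proof -
    have "expressible A 1 (conc P (lang_pow M j))" "expressible A 1 L"
      using PML expressible_mono[of A 0 _ 1] by (simp_all add: expressible_conc expressible_pow)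
    moreover have "expressible A 1 (lang_star (lang_pow M n))"
      using expressible_star[OF expressible_pow[OF PML(2)]] by simp
    ultimately show ?thesis
      unfolding U_def by (simp add: expressible_conc)
  qed
  have Count_progression: "(\<Union>i. Count A w (Suc (j + n * i))) = U j" for j
    unfolding U_def decomp by (rule UN_conc_pow_progression)
  assume "k < n"
  show "expressible A 1 (ModCount A w k n)"
  proof (cases k)
    case 0
    with \<open>k < n\<close> have "ModCount A w k n = Count A w 0 \<union> U (n - 1)"
      by (simp add: ModCount_eq_UN_Count mod_eq_0_set Count_progression[symmetric])
    then show ?thesis
      using Count[of 0] U by (simp add: expressible_union expressible_mono)
  next
    case (Suc j)
    with \<open>k < n\<close> have "ModCount A w k n = U j"
      by (simp add: ModCount_eq_UN_Count mod_eq_Suc_set Count_progression[symmetric])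
    then show ?thesis using U by simp
  qed
qed

section \<open>Factors without self-overlap\<close>

lemma Count_Suc_if_no_overlap:
  assumes w: "w \<in> lists A" "w \<noteq> []"
    and no_overlap: "\<And>u z. occ w (u @ w @ z) = occ w u + 1 + occ w z"
  shows "Count A w (Suc j) = conc (Count A w j) (conc {w} (Count A w 0))"
proof (intro equalityI subsetI)
  fix v assume "v \<in> conc (Count A w j) (conc {w} (Count A w 0))"
  then show "v \<in> Count A w (Suc j)"
    unfolding conc_def Count_def using no_overlap w by auto
next
  fix v assume v: "v \<in> Count A w (Suc j)"
  then obtain x y where xy: "v = x @ w @ y" "occ w (tl w @ y) = 0"
    using last_occurrence[OF w(2), of v] unfolding Count_def by auto
  then have "occ w y = 0"
    using occ_le_occ_append[OF w(2), of y "tl w"] by simp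
  moreover from this have "occ w x = j"
    using v xy no_overlap[of x y] unfolding Count_def by simp
  ultimately show "v \<in> conc (Count A w j) (conc {w} (Count A w 0))"
    using v xy unfolding conc_def Count_def by auto
qed

lemma expressible_Count_ModCount_if_no_overlap:
  assumes w: "w \<in> lists A" "w \<noteq> []"
    and no_overlap: "\<And>u z. occ w (u @ w @ z) = occ w u + 1 + occ w z"
  shows "expressible A 0 (Count A w k)"
    and "k < n \<Longrightarrow> expressible A 1 (ModCount A w k n)"
proof -
  let ?M = "conc {w} (Count A w 0)"
  have "Count A w (Suc j) = conc (conc (Count A w 0) (lang_pow ?M j)) ?M" for j
    using lang_pow_recurrence[of "Count A w" ?M j] Count_Suc_if_no_overlap[OF assms]
    by simp
  moreover have "expressible A 0 ?M"
    using w by (simp add: expressible_Count_0 expressible_conc expressible_word)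
  ultimately show "expressible A 0 (Count A w k)"
    and "k < n \<Longrightarrow> expressible A 1 (ModCount A w k n)"
    using expressible_Count_ModCount_if_decomposition[OF w(1) expressible_Count_0[OF w(1)]]
    by blast+
qed

section \<open>The factor \<open>aa\<close>\<close>

definition ends_with :: "'a \<Rightarrow> 'a list set" where
  "ends_with a = {v. v \<noteq> [] \<and> last v = a}"

definition starts_with :: "'a \<Rightarrow> 'a list set" where
  "starts_with a = {v. v \<noteq> [] \<and> hd v = a}"

lemma conc_lists_letter: "a \<in> A \<Longrightarrow> conc (lists A) {[a]} = lists A \<inter> ends_with a"
proof (intro equalityI subsetI)
  fix v assume "v \<in> lists A \<inter> ends_with a"
  then have "v = butlast v @ [a]" "butlast v \<in> lists A"
    unfolding ends_with_def by (auto dest: in_set_butlastD)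
  then show "v \<in> conc (lists A) {[a]}" unfolding conc_def by blast
qed (auto simp: conc_def ends_with_def)

lemma conc_letter_lists: "a \<in> A \<Longrightarrow> conc {[a]} (lists A) = lists A \<inter> starts_with a"
proof (intro equalityI subsetI)
  fix v assume "v \<in> lists A \<inter> starts_with a"
  then have "v = [a] @ tl v" "tl v \<in> lists A"
    unfolding starts_with_def by (auto simp: list.set_sel(2))
  then show "v \<in> conc {[a]} (lists A)" unfolding conc_def by blast
qed (auto simp: conc_def starts_with_def)

lemma conc_Int_ends_with:
  assumes "[] \<notin> Y"
  shows "conc X (Y \<inter> ends_with a) = conc X Y \<inter> ends_with a"
proof (intro equalityI subsetI)
  fix s assume "s \<in> conc X Y \<inter> ends_with a"
  then obtain u v where uv: "s = u @ v" "u \<in> X" "v \<in> Y" "last s = a"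
    unfolding conc_def ends_with_def by blast
  with assms have "v \<in> Y \<inter> ends_with a"
    unfolding ends_with_def by (auto simp: last_append)
  with uv show "s \<in> conc X (Y \<inter> ends_with a)"
    unfolding conc_def by blast
qed (auto simp: conc_def ends_with_def)

lemma Count_aa_Suc:
  "Count A [a, a] (Suc j) = conc (Count A [a, a] j \<inter> ends_with a) (Count A [a, a] 0 \<inter> starts_with a)"
proof (intro equalityI subsetI)
  fix v assume "v \<in> conc (Count A [a, a] j \<inter> ends_with a) (Count A [a, a] 0 \<inter> starts_with a)"
  then show "v \<in> Count A [a, a] (Suc j)"
    unfolding conc_def Count_def ends_with_def starts_with_def by (auto simp: occ_pair_append)
next
  fix v assume v: "v \<in> Count A [a, a] (Suc j)"
  then obtain x y where xy: "v = (x @ [a]) @ (a # y)" "occ [a, a] (a # y) = 0"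
    using last_occurrence[of "[a, a]" v] unfolding Count_def by auto
  then have "occ [a, a] (x @ [a]) = j"
    using v unfolding Count_def by (simp add: occ_pair_append del: append_assoc)
  with v xy have "x @ [a] \<in> Count A [a, a] j \<inter> ends_with a" "a # y \<in> Count A [a, a] 0 \<inter> starts_with a"
    unfolding Count_def ends_with_def starts_with_def by auto
  with xy(1) show "v \<in> conc (Count A [a, a] j \<inter> ends_with a) (Count A [a, a] 0 \<inter> starts_with a)"
    unfolding conc_def by blast
qed

lemma expressible_Count_ModCount_aa:
  assumes a: "a \<in> A"
  shows "expressible A 0 (Count A [a, a] k)"
    and "k < n \<Longrightarrow> expressible A 1 (ModCount A [a, a] k n)"
proof -
  let ?Z = "Count A [a, a] 0" and ?E = "ends_with a" and ?S = "starts_with a"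
  have "Count A [a, a] (Suc j) \<inter> ?E = conc (Count A [a, a] j \<inter> ?E) (?Z \<inter> ?S \<inter> ?E)" for j
    by (simp add: Count_aa_Suc conc_Int_ends_with starts_with_def)
  then have ends_a: "Count A [a, a] j \<inter> ?E = conc (?Z \<inter> ?E) (lang_pow (?Z \<inter> ?S \<inter> ?E) j)" for j
    by (rule lang_pow_recurrence)
  have decomp: "Count A [a, a] (Suc j)
      = conc (conc (?Z \<inter> ?E) (lang_pow (?Z \<inter> ?S \<inter> ?E) j)) (?Z \<inter> ?S)" for j
    unfolding Count_aa_Suc[of A a j] ends_a[of j] ..
  have "?Z \<subseteq> lists A"
    unfolding Count_def by blast
  then have "?Z \<inter> ?E = ?Z \<inter> (lists A \<inter> ?E)" "?Z \<inter> ?S = ?Z \<inter> (lists A \<inter> ?S)"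
    "?Z \<inter> ?S \<inter> ?E = ?Z \<inter> (lists A \<inter> ?S) \<inter> (lists A \<inter> ?E)"
    by blast+
  moreover have "expressible A 0 ?Z" "expressible A 0 (lists A \<inter> ?E)"
    "expressible A 0 (lists A \<inter> ?S)"
    using a by (simp_all add: expressible_Count_0 conc_lists_letter[symmetric]
        conc_letter_lists[symmetric] expressible_conc expressible_lists expressible_letter)
  ultimately have "expressible A 0 (?Z \<inter> ?E)" "expressible A 0 (?Z \<inter> ?S \<inter> ?E)"
    "expressible A 0 (?Z \<inter> ?S)"
    by (simp_all only: expressible_Int)
  from expressible_Count_ModCount_if_decomposition[OF _ this decomp] a
  show "expressible A 0 (Count A [a, a] k)"
    and "k < n \<Longrightarrow> expressible A 1 (ModCount A [a, a] k n)"
    by simp_all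
qed

theorem proposition2p4:
  fixes A :: "'a set" and w :: "'a list"
  assumes "finite A"
    and "w \<in> lists A" and "w \<noteq> []" and "length w \<le> 2"
  shows "(\<forall>k. star_height A (Count A w k) = 0)
       \<and> (\<forall>n k. 2 \<le> n \<longrightarrow> k < n \<longrightarrow> star_height A (ModCount A w k n) \<le> 1)"
proof -
  have "expressible A 0 (Count A w k) \<and> (k < n \<longrightarrow> expressible A 1 (ModCount A w k n))" for k n
  proof -
    consider a where "w = [a]" | a b where "w = [a, b]" "a \<noteq> b" | a where "w = [a, a]"
      using \<open>w \<noteq> []\<close> \<open>length w \<le> 2\<close>
      by (cases w rule: remdups_adj.cases) (auto simp: le_Suc_eq)
    then show ?thesis
    proof cases
      case (1 a)
      then show ?thesis
        using assms(2) expressible_Count_ModCount_if_no_overlap[of "[a]", OF _ _ occ_singleton_no_overlap]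
        by simp
    next
      case (2 a b)
      then show ?thesis
        using assms(2) expressible_Count_ModCount_if_no_overlap[of "[a, b]", OF _ _ occ_pair_no_overlap]
        by simp
    next
      case (3 a)
      then show ?thesis using assms(2) expressible_Count_ModCount_aa[of a A] by simp
    qed
  qed
  then show ?thesis
    using star_height_le_if_expressible[of A 0] star_height_le_if_expressible[of A 1]
    by (metis le_zero_eq)
qed

end
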